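(* Let $\mathfrak g=\mathfrak k+_\rho V$ be the semidirect sum of a finite-dimensional real Lie algebra $\mathfrak k$ and a commutative ideal $V$ via a representation $\rho:\mathfrak k\to\operatorname{End}(V)$. Let $f,g$ be polynomials on $\mathfrak g^*$ each satisfying $F(M,v)=F(M+L,v)$ for all $(M,v)\in\mathfrak g^*$ and $L\in\mathrm{St}_{\rho^*}(v)^\perp$, so that $f(M,v)=f_v(\pi_v(M))$ and $g(M,v)=g_v(\pi_v(M))$ for functions $f_v,g_v$ on $\mathrm{St}_{\rho^*}(v)^*$. Then $$\{f,g\}(M,v)=\{f_v,g_v\}_{\mathrm{St}_{\rho^*}(v)}(\pi_v(M)),$$ where the left side is the Lie–Poisson bracket of $\mathfrak g^*$ and the right side is the Lie–Poisson bracket on $\mathrm{St}_{\rho^*}(v)^*$.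
   Context: Elements of $\mathfrak g^*=\mathfrak k^*\oplus V^*$ are pairs $(M,v)$. $\rho^*:\mathfrak k\to\operatorname{End}(V^* )$ is the dual representation, $\mathrm{St}_{\rho^*}(v)=\{X\in\mathfrak k\mid\rho^*(X)v=0\}$, $\mathrm{St}_{\rho^*}(v)^\perp\subset\mathfrak k^*$ its annihilator, and $\pi_v:\mathfrak k^*\to\mathrm{St}_{\rho^*}(v)^*$ the restriction map. The Lie–Poisson bracket on $\mathfrak l^*$ for a Lie algebra $\mathfrak l$ is $\{f,g\}(x)=\langle x,[df(x),dg(x)]\rangle$. *)

theory Defs
  imports "HOL-Analysis.Analysis"
begin

text \<open>Finite-dimensional real vector spaces are modelled by euclidean_space types;
  the dual of such a space is identified with the space itself via the inner product
  (pairing of a functional M with a vector X is M \<bullet> X).\<close>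

definition lie_algebra :: "('k::euclidean_space \<Rightarrow> 'k \<Rightarrow> 'k) \<Rightarrow> bool" where
  "lie_algebra br \<longleftrightarrow> bilinear br \<and> (\<forall>x. br x x = 0) \<and>
     (\<forall>x y z. br x (br y z) + br y (br z x) + br z (br x y) = 0)"

definition lie_rep :: "('k::euclidean_space \<Rightarrow> 'k \<Rightarrow> 'k) \<Rightarrow> ('k \<Rightarrow> 'v::euclidean_space \<Rightarrow> 'v) \<Rightarrow> bool" where
  "lie_rep br \<rho> \<longleftrightarrow> bilinear \<rho> \<and>
     (\<forall>X Y. \<rho> (br X Y) = \<rho> X \<circ> \<rho> Y - \<rho> Y \<circ> \<rho> X)"

definition sd_bracket :: "('k::euclidean_space \<Rightarrow> 'k \<Rightarrow> 'k) \<Rightarrow> ('k \<Rightarrow> 'v::euclidean_space \<Rightarrow> 'v)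
     \<Rightarrow> 'k \<times> 'v \<Rightarrow> 'k \<times> 'v \<Rightarrow> 'k \<times> 'v" where
  "sd_bracket br \<rho> a b = (br (fst a) (fst b), \<rho> (fst a) (snd b) - \<rho> (fst b) (snd a))"

text \<open>Dual representation: (rho*(X) xi)(w) = - xi(rho(X) w).\<close>
definition rho_dual :: "('k \<Rightarrow> 'v::euclidean_space \<Rightarrow> 'v) \<Rightarrow> 'k \<Rightarrow> 'v \<Rightarrow> 'v" where
  "rho_dual \<rho> X v = - adjoint (\<rho> X) v"

definition St :: "('k \<Rightarrow> 'v::euclidean_space \<Rightarrow> 'v) \<Rightarrow> 'v \<Rightarrow> 'k set" where
  "St \<rho> v = {X. rho_dual \<rho> X v = 0}"

definition annihilator :: "'k::euclidean_space set \<Rightarrow> 'k set" where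
  "annihilator S = {L. \<forall>X\<in>S. L \<bullet> X = 0}"

text \<open>Restriction map k* \<rightarrow> S* for a subspace S; S* is identified with S, so the
  restriction of M is represented by the unique p \<in> S with (M - p) vanishing on S.\<close>
definition restr :: "'k::euclidean_space set \<Rightarrow> 'k \<Rightarrow> 'k" where
  "restr S M = (THE p. p \<in> S \<and> (\<forall>X\<in>S. (M - p) \<bullet> X = 0))"

inductive polyfun :: "('a::euclidean_space \<Rightarrow> real) \<Rightarrow> bool" where
  pconst: "polyfun (\<lambda>x. c)"
| plin: "polyfun (\<lambda>x. a \<bullet> x)"
| padd: "polyfun f \<Longrightarrow> polyfun g \<Longrightarrow> polyfun (\<lambda>x. f x + g x)"
| pmult: "polyfun f \<Longrightarrow> polyfun g \<Longrightarrow> polyfun (\<lambda>x. f x * g x)"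

text \<open>Differential df(x) \<in> S** = S of a function on S* (identified with the subspace S),
  at a point x \<in> S.\<close>
definition grad_within :: "('a::euclidean_space \<Rightarrow> real) \<Rightarrow> 'a set \<Rightarrow> 'a \<Rightarrow> 'a" where
  "grad_within f S x = (THE d. d \<in> S \<and> (f has_derivative (\<lambda>h. d \<bullet> h)) (at x within S))"

definition lie_poisson :: "('a::euclidean_space \<Rightarrow> 'a \<Rightarrow> 'a) \<Rightarrow> 'a set \<Rightarrow>
    ('a \<Rightarrow> real) \<Rightarrow> ('a \<Rightarrow> real) \<Rightarrow> 'a \<Rightarrow> real" where
  "lie_poisson br S f g x = x \<bullet> br (grad_within f S x) (grad_within g S x)"

end

theory Submission
  imports Defs
begin

text \<open>Let \<open>S = St(v)\<close>, \<open>p = \<pi>\<^sub>v(M)\<close> and let \<open>a\<close> be the \<open>\<frak>k\<close>-component of \<open>df(M,v)\<close>.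
  Since \<open>f(\<cdot>,v)\<close> is constant along \<open>S\<^sup>\<perp>\<close>, \<open>a\<close> annihilates \<open>S\<^sup>\<perp>\<close> and so lies in \<open>S\<close>; and since
  \<open>f(\<cdot>,v)\<close> is invariant under translation by \<open>M - p \<in> S\<^sup>\<perp>\<close>, \<open>a\<close> is also the gradient of
  \<open>f\<^sub>v\<close> at \<open>p\<close> within \<open>S\<close>. Likewise for \<open>g\<close> with component \<open>c\<close>. In
  \<open>\<langle>(M,v), [df, dg]\<rangle>\<close> the \<open>V\<close>-part is \<open>\<langle>v, \<rho>(a)w\<rangle> - \<langle>v, \<rho>(c)w'\<rangle> = 0\<close> because \<open>a, c\<close>
  stabilise \<open>v\<close>, and \<open>\<langle>M, [a,c]\<rangle> = \<langle>p, [a,c]\<rangle>\<close> because \<open>S\<close> is a subalgebra.\<close>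

lemma polyfun_has_gradient:
  assumes "polyfun f"
  shows "\<exists>G. \<forall>x. (f has_derivative (\<lambda>h. G x \<bullet> h)) (at x)"
  using assms
proof induction
  case (pconst c)
  show ?case by (intro exI[of _ "\<lambda>x. 0"]) auto
next
  case (plin a)
  show ?case by (intro exI[of _ "\<lambda>x. a"]) (auto intro!: derivative_eq_intros)
next
  case (padd f g)
  then obtain F G where "\<And>x. (f has_derivative (\<lambda>h. F x \<bullet> h)) (at x)"
    and "\<And>x. (g has_derivative (\<lambda>h. G x \<bullet> h)) (at x)" by blast
  then show ?case
    by (intro exI[of _ "\<lambda>x. F x + G x"]) (auto intro!: derivative_eq_intros simp: inner_add_left)
next
  case (pmult f g)
  then obtain F G where "\<And>x. (f has_derivative (\<lambda>h. F x \<bullet> h)) (at x)"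
    and "\<And>x. (g has_derivative (\<lambda>h. G x \<bullet> h)) (at x)" by blast
  then show ?case
    by (intro exI[of _ "\<lambda>x. f x *\<^sub>R G x + g x *\<^sub>R F x"])
      (auto intro!: derivative_eq_intros simp: inner_add_left algebra_simps)
qed

lemma has_derivative_inner_along_line:
  fixes f :: "'a::euclidean_space \<Rightarrow> real"
  assumes "(f has_derivative (\<lambda>h. d \<bullet> h)) (at p within S)" and "\<And>t. p + t *\<^sub>R w \<in> S"
  shows "((\<lambda>t. f (p + t *\<^sub>R w)) has_derivative (\<lambda>t. t * (d \<bullet> w))) (at 0)"
proof -
  have line: "((\<lambda>t. p + t *\<^sub>R w) has_derivative (\<lambda>t. t *\<^sub>R w)) (at 0)"
    by (auto intro!: derivative_eq_intros)
  have "(f has_derivative (\<lambda>h. d \<bullet> h)) (at (p + 0 *\<^sub>R w) within range (\<lambda>t. p + t *\<^sub>R w))"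
    by simp (rule has_derivative_subset[OF assms(1)], use assms(2) in auto)
  from diff_chain_within[OF line this] show ?thesis
    by (simp add: o_def)
qed

lemma has_derivative_Pair_left:
  fixes f :: "'a::euclidean_space \<times> 'b::euclidean_space \<Rightarrow> real"
  assumes "(f has_derivative (\<lambda>h. d \<bullet> h)) (at (x, v))"
  shows "((\<lambda>y. f (y, v)) has_derivative (\<lambda>h. fst d \<bullet> h)) (at x)"
proof -
  have "((\<lambda>y. (y, v)) has_derivative (\<lambda>h. (h, 0))) (at x)"
    by (auto intro!: derivative_eq_intros)
  from diff_chain_at[OF this assms] show ?thesis
    by (cases d) (simp add: o_def)
qed

lemma subspace_eq_if_inner_eq:
  assumes "subspace S" "x \<in> S" "y \<in> S" "\<And>w. w \<in> S \<Longrightarrow> x \<bullet> w = y \<bullet> w"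
  shows "x = y"
proof -
  have "(x - y) \<bullet> (x - y) = 0"
    using assms by (simp add: subspace_diff inner_diff_left)
  then show ?thesis by simp
qed

lemma grad_within_eqI:
  fixes f :: "'a::euclidean_space \<Rightarrow> real"
  assumes S: "subspace S" and "p \<in> S" "d \<in> S"
    and D: "(f has_derivative (\<lambda>h. d \<bullet> h)) (at p within S)"
  shows "grad_within f S p = d"
  unfolding grad_within_def
proof (rule the_equality)
  fix d'
  assume d': "d' \<in> S \<and> (f has_derivative (\<lambda>h. d' \<bullet> h)) (at p within S)"
  show "d' = d"
  proof (rule subspace_eq_if_inner_eq[OF S])
    fix w
    assume "w \<in> S"
    then have "p + t *\<^sub>R w \<in> S" for t
      using S \<open>p \<in> S\<close> by (simp add: subspace_add subspace_scale)
    from has_derivative_unique[OF has_derivative_inner_along_line[OF conjunct2[OF d'] this]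
        has_derivative_inner_along_line[OF D this]]
    show "d' \<bullet> w = d \<bullet> w" by (metis mult_1)
  qed (use d' assms in auto)
qed (use assms in auto)

lemma grad_within_UNIV_eqI:
  fixes f :: "'a::euclidean_space \<Rightarrow> real"
  assumes "(f has_derivative (\<lambda>h. d \<bullet> h)) (at x)"
  shows "grad_within f UNIV x = d"
  using grad_within_eqI[of UNIV] assms by simp

lemma gradient_orthogonal_invariant_direction:
  fixes f :: "'a::euclidean_space \<Rightarrow> real"
  assumes "(f has_derivative (\<lambda>h. d \<bullet> h)) (at p)" and "\<And>t. f (p + t *\<^sub>R w) = f p"
  shows "d \<bullet> w = 0"
proof -
  have "((\<lambda>t. f (p + t *\<^sub>R w)) has_derivative (\<lambda>t. t * (d \<bullet> w))) (at 0)"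
    using has_derivative_inner_along_line[of f d p UNIV w] assms(1) by simp
  moreover have "((\<lambda>t. f (p + t *\<^sub>R w)) has_derivative (\<lambda>t. 0)) (at 0)"
    using assms(2) by simp
  ultimately show ?thesis
    by (metis has_derivative_unique mult_1)
qed

lemma annihilator_annihilator_subset:
  assumes "subspace S"
  shows "annihilator (annihilator S) \<subseteq> S"
proof
  fix a
  assume a: "a \<in> annihilator (annihilator S)"
  obtain y z where y: "y \<in> span S" and z: "\<And>w. w \<in> span S \<Longrightarrow> orthogonal z w" and "a = y + z"
    using orthogonal_subspace_decomp_exists[of S a] by metis
  have "z \<in> annihilator S"
    using z span_superset by (fastforce simp: annihilator_def orthogonal_def inner_commute)
  then have "z \<bullet> (y + z) = 0" using a \<open>a = y + z\<close> by (simp add: annihilator_def inner_commute)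
  moreover have "z \<bullet> y = 0" using z y by (simp add: orthogonal_def)
  ultimately have "z = 0" by (simp add: inner_add_right)
  then show "a \<in> S" using \<open>a = y + z\<close> y span_eq_iff[THEN iffD2, OF assms] by simp
qed

lemma restr_eqI:
  assumes S: "subspace S" and "p \<in> S" and "\<And>X. X \<in> S \<Longrightarrow> p \<bullet> X = M \<bullet> X"
  shows "restr S M = p"
  unfolding restr_def
proof (rule the_equality)
  fix q
  assume "q \<in> S \<and> (\<forall>X\<in>S. (M - q) \<bullet> X = 0)"
  then show "q = p"
    using assms by (intro subspace_eq_if_inner_eq[OF S]) (auto simp: inner_diff_left)
qed (use assms in \<open>auto simp: inner_diff_left\<close>)

lemma restr_id:
  assumes "subspace S" "x \<in> S"
  shows "restr S x = x"
  using assms by (rule restr_eqI) simp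

lemma restr_subspace:
  assumes S: "subspace S"
  shows "restr S M \<in> S" and "X \<in> S \<Longrightarrow> restr S M \<bullet> X = M \<bullet> X"
proof -
  obtain y z where y: "y \<in> span S" and z: "\<And>w. w \<in> span S \<Longrightarrow> orthogonal z w" and "M = y + z"
    using orthogonal_subspace_decomp_exists[of S M] by metis
  have yS: "y \<in> S"
    using y span_eq_iff[THEN iffD2, OF S] by simp
  have "restr S M = y"
    using z span_superset \<open>M = y + z\<close>
    by (intro restr_eqI[OF S yS]) (auto simp: orthogonal_def inner_add_left)
  then show "restr S M \<in> S" and "X \<in> S \<Longrightarrow> restr S M \<bullet> X = M \<bullet> X"
    using yS z span_superset \<open>M = y + z\<close> by (auto simp: orthogonal_def inner_add_left)
qed

lemma grad_within_restr:
  fixes \<phi> \<psi> :: "'a::euclidean_space \<Rightarrow> real"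
  assumes S: "subspace S"
    and D: "(\<phi> has_derivative (\<lambda>h. a \<bullet> h)) (at M)"
    and inv: "\<And>y L. L \<in> annihilator S \<Longrightarrow> \<phi> (y + L) = \<phi> y"
    and \<psi>: "\<And>y. y \<in> S \<Longrightarrow> \<psi> y = \<phi> y"
  shows "a \<in> S" and "grad_within \<psi> S (restr S M) = a"
proof -
  have "a \<bullet> L = 0" if "L \<in> annihilator S" for L
  proof -
    have "t *\<^sub>R L \<in> annihilator S" for t
      using that by (simp add: annihilator_def)
    then show ?thesis
      using gradient_orthogonal_invariant_direction[OF D, of L] inv by simp
  qed
  then have "a \<in> annihilator (annihilator S)"
    unfolding annihilator_def by blast
  then show aS: "a \<in> S"
    using annihilator_annihilator_subset[OF S] by blast
  define p where "p = restr S M"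
  have pS: "p \<in> S" and "M - p \<in> annihilator S"
    using restr_subspace[OF S] by (auto simp: p_def annihilator_def inner_diff_left)
  then have "(\<lambda>y. \<phi> (y + (M - p))) = \<phi>"
    using inv by auto
  moreover
  have "((\<lambda>y. y + (M - p)) has_derivative (\<lambda>h. h)) (at p)"
    by (auto intro!: derivative_eq_intros)
  moreover have "(\<phi> has_derivative (\<lambda>h. a \<bullet> h)) (at (p + (M - p)))"
    using D by simp
  ultimately have "(\<phi> has_derivative (\<lambda>h. a \<bullet> h)) (at p)"
    using diff_chain_at[of "\<lambda>y. y + (M - p)" _ p \<phi>] by (simp add: o_def)
  then have "(\<phi> has_derivative (\<lambda>h. a \<bullet> h)) (at p within S)"
    by (rule has_derivative_at_withinI)
  then have "(\<psi> has_derivative (\<lambda>h. a \<bullet> h)) (at p within S)"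
    by (rule has_derivative_transform_within[where d=1]) (use pS \<psi> in auto)
  then show "grad_within \<psi> S p = a"
    by (rule grad_within_eqI[OF S pS aS])
qed

lemma grad_within_restr_slice:
  fixes f :: "'a::euclidean_space \<times> 'b::euclidean_space \<Rightarrow> real"
  assumes S: "subspace S"
    and D: "(f has_derivative (\<lambda>h. d \<bullet> h)) (at (M, v))"
    and inv: "\<And>M' L. L \<in> annihilator S \<Longrightarrow> f (M', v) = f (M' + L, v)"
    and f\<^sub>v: "\<And>M'. f (M', v) = f\<^sub>v (restr S M')"
  shows "fst d \<in> S" and "grad_within f\<^sub>v S (restr S M) = fst d"
proof -
  have "\<And>y L. L \<in> annihilator S \<Longrightarrow> f (y + L, v) = f (y, v)"
    using inv by metis
  moreover have "\<And>y. y \<in> S \<Longrightarrow> f\<^sub>v y = f (y, v)"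
    using f\<^sub>v restr_id[OF S] by metis
  ultimately show "fst d \<in> S" and "grad_within f\<^sub>v S (restr S M) = fst d"
    using grad_within_restr[OF S has_derivative_Pair_left[OF D]] by blast+
qed

lemma St_iff:
  assumes "bilinear \<rho>"
  shows "X \<in> St \<rho> v \<longleftrightarrow> (\<forall>w. v \<bullet> \<rho> X w = 0)"
proof -
  have "linear (\<rho> X)"
    using assms by (simp add: bilinear_def)
  then have adj: "w \<bullet> adjoint (\<rho> X) v = v \<bullet> \<rho> X w" for w
    by (simp add: adjoint_works inner_commute)
  have "adjoint (\<rho> X) v = 0 \<longleftrightarrow> (\<forall>w. w \<bullet> adjoint (\<rho> X) v = 0)"
    by (metis inner_eq_zero_iff inner_zero_right)
  then show ?thesis
    by (simp add: St_def rho_dual_def adj)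
qed

lemma subspace_St:
  assumes "bilinear \<rho>"
  shows "subspace (St \<rho> v)"
  unfolding subspace_def
  by (auto simp: St_iff[OF assms] bilinear_lzero[OF assms] bilinear_ladd[OF assms]
      bilinear_lmul[OF assms] inner_add_right)

lemma St_bracket_closed:
  assumes "lie_rep br \<rho>" "X \<in> St \<rho> v" "Y \<in> St \<rho> v"
  shows "br X Y \<in> St \<rho> v"
proof -
  have "bilinear \<rho>" and "\<rho> (br X Y) = \<rho> X \<circ> \<rho> Y - \<rho> Y \<circ> \<rho> X"
    using assms(1) by (auto simp: lie_rep_def)
  then show ?thesis
    using assms(2,3) by (simp add: St_iff inner_diff_right)
qed

lemma inner_sd_bracket_St:
  assumes "bilinear \<rho>" "X \<in> St \<rho> v" "Y \<in> St \<rho> v"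
  shows "(M, v) \<bullet> sd_bracket br \<rho> (X, x) (Y, y) = M \<bullet> br X Y"
  using assms by (simp add: sd_bracket_def St_iff inner_diff_right)

theorem lemma12:
  fixes br :: "'k::euclidean_space \<Rightarrow> 'k \<Rightarrow> 'k"
    and \<rho> :: "'k \<Rightarrow> 'v::euclidean_space \<Rightarrow> 'v"
    and f g :: "'k \<times> 'v \<Rightarrow> real"
    and fv gv :: "'k \<Rightarrow> real"
    and M :: 'k and v :: 'v
  assumes "lie_algebra br"
    and "lie_rep br \<rho>"
    and "polyfun f" and "polyfun g"
    and "\<And>M' v' L. L \<in> annihilator (St \<rho> v') \<Longrightarrow> f (M', v') = f (M' + L, v')"
    and "\<And>M' v' L. L \<in> annihilator (St \<rho> v') \<Longrightarrow> g (M', v') = g (M' + L, v')"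
    and "\<And>M'. f (M', v) = fv (restr (St \<rho> v) M')"
    and "\<And>M'. g (M', v) = gv (restr (St \<rho> v) M')"
  shows "lie_poisson (sd_bracket br \<rho>) UNIV f g (M, v)
       = lie_poisson br (St \<rho> v) fv gv (restr (St \<rho> v) M)"
proof -
  define S where "S = St \<rho> v"
  have \<rho>: "bilinear \<rho>" using assms(2) by (simp add: lie_rep_def)
  have S: "subspace S" unfolding S_def using \<rho> by (rule subspace_St)
  obtain F G where F: "\<And>z. (f has_derivative (\<lambda>h. F z \<bullet> h)) (at z)"
    and G: "\<And>z. (g has_derivative (\<lambda>h. G z \<bullet> h)) (at z)"
    using polyfun_has_gradient assms(3,4) by metis
  obtain a x c y where Fa: "F (M, v) = (a, x)" and Gc: "G (M, v) = (c, y)"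
    by (meson prod.exhaust)
  have aS: "a \<in> S" and grad_fv: "grad_within fv S (restr S M) = a"
    using grad_within_restr_slice[OF S F[of "(M, v)"] assms(5)[of _ v, folded S_def]
        assms(7)[folded S_def]]
    by (simp_all add: Fa)
  have cS: "c \<in> S" and grad_gv: "grad_within gv S (restr S M) = c"
    using grad_within_restr_slice[OF S G[of "(M, v)"] assms(6)[of _ v, folded S_def]
        assms(8)[folded S_def]]
    by (simp_all add: Gc)
  have "lie_poisson (sd_bracket br \<rho>) UNIV f g (M, v)
      = (M, v) \<bullet> sd_bracket br \<rho> (a, x) (c, y)"
    by (simp add: lie_poisson_def grad_within_UNIV_eqI[OF F] grad_within_UNIV_eqI[OF G] Fa Gc)
  also have "\<dots> = M \<bullet> br a c"
    using inner_sd_bracket_St[OF \<rho>] aS cS by (simp add: S_def)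
  also have "\<dots> = restr S M \<bullet> br a c"
    using restr_subspace(2)[OF S] St_bracket_closed[OF assms(2)] aS cS by (simp add: S_def)
  also have "\<dots> = lie_poisson br S fv gv (restr S M)"
    by (simp add: lie_poisson_def grad_fv grad_gv)
  finally show ?thesis
    by (simp add: S_def)
qed

end
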